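(* Let $\mathbb{A}_1\subseteq\cdots\subseteq\mathbb{A}_k$ be a flag of linear subspaces of $\mathbb{R}^n$ and $b\in\mathbb{R}^n$. Then $s_b\bigl(\Omega(\mathbb{A}_1,\dots,\mathbb{A}_k)\bigr)=\{\mathbb{B}+b:\mathbb{B}\in\Omega(\mathbb{A}_1,\dots,\mathbb{A}_k)\}$ is a strong deformation retract of $\Psi(\mathbb{A}_1+b,\dots,\mathbb{A}_k+b)$. In particular, $\Psi(\mathbb{A}_1+b,\dots,\mathbb{A}_k+b)$ is homotopy equivalent to $\tau^{-1}\bigl(\Omega(\mathbb{A}_1,\dots,\mathbb{A}_k)\bigr)$.
   Context: $\mathrm{Graff}(k,n)$ is the manifold of $k$-dimensional affine subspaces of $\mathbb{R}^n$, $\tau:\mathrm{Graff}(k,n)\to\mathrm{Gr}(k,n)$, $\mathbb{A}+c\mapsto\mathbb{A}$, and subsets carry the subspace topology. $\Omega(\mathbb{A}_1,\dots,\mathbb{A}_k)=\{\mathbb{B}\in\mathrm{Gr}(k,n):\dim(\mathbb{B}\cap\mathbb{A}_j)\ge j,\ j=1,\dots,k\}$; $\Psi(\mathbb{A}_1+b,\dots,\mathbb{A}_k+b)=\{\mathbb{B}+c\in\mathrm{Graff}(k,n):\dim((\mathbb{B}+c)\cap(\mathbb{A}_j+b))\ge j,\ j=1,\dots,k\}$; $s_b(\mathbb{B})=\mathbb{B}+b$. *)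

theory Defs
  imports "HOL-Analysis.Analysis"
begin

text \<open>Topology: induced by the embedding V \<mapsto> orthogonal projection onto V
  (as a map in the function space, product = pointwise topology, which on
  linear maps of a finite-dimensional space is the usual matrix topology).\<close>
definition Gr :: "nat \<Rightarrow> ('a::euclidean_space) set set" where
  "Gr k = {V. subspace V \<and> dim V = k}"

definition Gr_top :: "nat \<Rightarrow> ('a::euclidean_space) set topology" where
  "Gr_top k = pullback_topology (Gr k) closest_point euclidean"

text \<open>Topology: induced by S \<mapsto> affine orthogonal projection onto S (equivalently
  by the pair (projection onto the direction of S, displacement of S orthogonal
  to its direction)), i.e. the standard manifold topology.\<close>
definition Graff :: "nat \<Rightarrow> ('a::euclidean_space) set set" where
  "Graff k = {S. affine S \<and> S \<noteq> {} \<and> aff_dim S = int k}"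

definition Graff_top :: "nat \<Rightarrow> ('a::euclidean_space) set topology" where
  "Graff_top k = pullback_topology (Graff k) closest_point euclidean"

text \<open>tau : Graff(k,n) \<rightarrow> Gr(k,n), A + c \<mapsto> A (the direction of the affine subspace).\<close>
definition tau :: "('a::euclidean_space) set \<Rightarrow> 'a set" where
  "tau S = (\<lambda>x. x - (SOME a. a \<in> S)) ` S"

definition s_tr :: "('a::euclidean_space) \<Rightarrow> 'a set \<Rightarrow> 'a set" where
  "s_tr b B = (\<lambda>x. x + b) ` B"

definition Omega :: "nat \<Rightarrow> (nat \<Rightarrow> ('a::euclidean_space) set) \<Rightarrow> 'a set set" where
  "Omega k A = {B \<in> Gr k. \<forall>j\<in>{1..k}. dim (B \<inter> A j) \<ge> j}"

text \<open>Affine Schubert variety Psi(A_1+b,...,A_k+b) in Graff(k,n);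
  dimension of an affine set is aff_dim (the empty set has dimension -1).\<close>
definition Psi :: "nat \<Rightarrow> (nat \<Rightarrow> ('a::euclidean_space) set) \<Rightarrow> 'a \<Rightarrow> 'a set set" where
  "Psi k A b = {S \<in> Graff k. \<forall>j\<in>{1..k}. aff_dim (S \<inter> s_tr b (A j)) \<ge> int j}"

definition strong_deformation_retract_of_space :: "'a set \<Rightarrow> 'a topology \<Rightarrow> bool" where
  "strong_deformation_retract_of_space S X \<longleftrightarrow>
     S \<subseteq> topspace X \<and>
     (\<exists>r. homotopic_with (\<lambda>h. \<forall>x\<in>S. h x = x) X X id r \<and> r ` topspace X \<subseteq> S)"

end

theory Submission
  imports Defs
begin

text \<open>Let \<open>q S\<close> be the point of an affine subspace \<open>S\<close> nearest to \<open>b\<close>. Sliding \<open>S\<close> by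
  \<open>t (b - q S)\<close>, \<open>0 \<le> t \<le> 1\<close>, moves it to the parallel subspace \<open>tau S + b\<close> through \<open>b\<close>
  and fixes every \<open>S\<close> that already contains \<open>b\<close>. The slide is continuous because orthogonal
  projection commutes with translations and is 1-Lipschitz. It keeps the direction \<open>tau S\<close>,
  and it keeps \<open>S\<close> meeting each \<open>A j + b\<close>: if \<open>p\<close> lies in both, so does \<open>p + t (b - p)\<close>
  after the slide.\<close>

lemma s_tr_eq_translation: "s_tr b B = (+) b ` B"
  unfolding s_tr_def by (rule image_cong) (auto simp: add.commute)

lemma mem_translation_iff: "x \<in> (+) a ` M \<longleftrightarrow> x - a \<in> M"
  for a :: "'a::ab_group_add"
  by (auto intro: image_eqI[where x = "x - a"])

lemma closest_point_translation:
  fixes S :: "'a::euclidean_space set"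
  assumes "convex S" "closed S" "S \<noteq> {}"
  shows "closest_point ((+) v ` S) y = v + closest_point S (y - v)"
proof (rule closest_point_unique[symmetric])
  show "convex ((+) v ` S)" "closed ((+) v ` S)"
    using convex_translation[OF assms(1)] closed_translation[OF assms(2)] by auto
  show "v + closest_point S (y - v) \<in> (+) v ` S"
    using closest_point_in_set[OF assms(2,3)] by blast
  have "dist y (v + x) = dist (y - v) x" for x
    by (simp add: dist_norm algebra_simps)
  then show "\<forall>z\<in>(+) v ` S. dist y (v + closest_point S (y - v)) \<le> dist y z"
    using closest_point_le[OF assms(2)] by auto
qed

lemma tau_eq_translation:
  fixes S :: "'a::euclidean_space set"
  assumes "affine S" "a \<in> S"
  shows "tau S = (+) (- a) ` S"
proof -
  have diff_mem: "x - c \<in> (+) (- a') ` S" if "x \<in> S" "a' \<in> S" "c \<in> S" for x a' c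
  proof (rule image_eqI)
    show "x - c = - a' + (x + 1 *\<^sub>R (a' - c))" by simp
    show "x + 1 *\<^sub>R (a' - c) \<in> S" by (rule mem_affine_3_minus[OF assms(1) that])
  qed
  define c where "c = (SOME c. c \<in> S)"
  have "c \<in> S" unfolding c_def using assms(2) by (rule someI)
  then have "(\<lambda>x. x - c) ` S = (+) (- a) ` S"
    using diff_mem[OF _ assms(2)] diff_mem[of _ c a, OF _ _ assms(2)] by fastforce
  then show ?thesis unfolding tau_def c_def .
qed

lemma
  fixes S :: "'a::euclidean_space set"
  assumes "affine S" "a \<in> S"
  shows subspace_tau: "subspace (tau S)"
    and aff_dim_eq_dim_tau: "aff_dim S = int (dim (tau S))"
    and translation_tau: "(+) a ` tau S = S"
proof -
  show sub: "subspace (tau S)"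
    unfolding tau_eq_translation[OF assms] using affine_diffs_subspace[OF assms] by simp
  show "aff_dim S = int (dim (tau S))"
    using aff_dim_subspace[OF sub] aff_dim_translation_eq[of "- a" S]
    by (simp add: tau_eq_translation[OF assms])
  show "(+) a ` tau S = S"
    by (simp add: tau_eq_translation[OF assms] image_image)
qed

lemma tau_translation:
  fixes S :: "'a::euclidean_space set"
  assumes "affine S" "S \<noteq> {}"
  shows "tau ((+) v ` S) = tau S"
proof -
  obtain a where a: "a \<in> S" using assms(2) by blast
  have "affine ((+) v ` S)" using assms(1) by (rule affine_translation[THEN iffD1])
  then have "tau ((+) v ` S) = (+) (- (v + a)) ` (+) v ` S"
    using a by (intro tau_eq_translation) auto
  also have "\<dots> = tau S"
    by (simp add: tau_eq_translation[OF assms(1) a] image_image)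
  finally show ?thesis .
qed

lemma Graff_translation: "S \<in> Graff k \<Longrightarrow> (+) v ` S \<in> Graff k"
  unfolding Graff_def by (simp add: affine_translation[THEN iffD1] aff_dim_translation_eq)

lemma
  assumes "S \<in> Graff k"
  shows Graff_closed: "closed S" and Graff_convex: "convex S" and Graff_nonempty: "S \<noteq> {}"
  using assms by (simp_all add: Graff_def affine_closed affine_imp_convex)

lemma tau_in_Gr:
  assumes "S \<in> Graff k"
  shows "tau S \<in> Gr k"
proof -
  obtain a where "a \<in> S" using Graff_nonempty[OF assms] by blast
  moreover have "affine S" "aff_dim S = int k" using assms unfolding Graff_def by simp_all
  ultimately show ?thesis
    unfolding Gr_def using subspace_tau aff_dim_eq_dim_tau by force
qed

lemma s_tr_image_Omega_eq:
  "s_tr b ` Omega k A = {S \<in> Graff k. tau S \<in> Omega k A \<and> b \<in> S}"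
proof (intro equalityI subsetI)
  fix S assume "S \<in> s_tr b ` Omega k A"
  then obtain B where B: "B \<in> Omega k A" and S: "S = (+) b ` B"
    by (auto simp: s_tr_eq_translation)
  then have "subspace B" "dim B = k" unfolding Omega_def Gr_def by auto
  then have "affine B" "0 \<in> B" "aff_dim B = int k"
    by (simp_all add: subspace_imp_affine subspace_0 aff_dim_subspace)
  then have aS: "affine S" and bS: "b \<in> S" and "aff_dim S = int k"
    unfolding S by (simp_all add: affine_translation[THEN iffD1] aff_dim_translation_eq)
  then have "S \<in> Graff k" unfolding Graff_def by auto
  moreover have "tau S = B"
    using tau_eq_translation[OF aS bS] by (simp add: S image_image)
  ultimately show "S \<in> {S \<in> Graff k. tau S \<in> Omega k A \<and> b \<in> S}"
    using B bS by simp
next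
  fix S assume "S \<in> {S \<in> Graff k. tau S \<in> Omega k A \<and> b \<in> S}"
  then have "S = s_tr b (tau S)" and "tau S \<in> Omega k A"
    unfolding Graff_def s_tr_eq_translation using translation_tau by auto
  then show "S \<in> s_tr b ` Omega k A" by blast
qed

lemma Int_translated_subspace_eq:
  fixes S L :: "'a::euclidean_space set"
  assumes "affine S" "subspace L" "p \<in> S \<inter> (+) b ` L"
  shows "S \<inter> (+) b ` L = (+) p ` (tau S \<inter> L)"
proof -
  have pS: "p \<in> S" and "p - b \<in> L" using assms(3) mem_translation_iff by blast+
  then have L_iff: "x - b \<in> L \<longleftrightarrow> x - p \<in> L" for x
    using subspace_add[OF assms(2), of "x - p" "p - b"] subspace_diff[OF assms(2), of "x - b" "p - b"]
    by auto
  have S_iff: "x \<in> S \<longleftrightarrow> x - p \<in> tau S" for x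
    by (auto simp: tau_eq_translation[OF assms(1) pS])
  show ?thesis
    by (rule set_eqI) (simp add: mem_translation_iff L_iff S_iff)
qed

lemma aff_dim_Int_translated_subspace:
  fixes S L :: "'a::euclidean_space set"
  assumes "affine S" "subspace L" "S \<inter> (+) b ` L \<noteq> {}"
  shows "aff_dim (S \<inter> (+) b ` L) = int (dim (tau S \<inter> L))"
proof -
  obtain p where p: "p \<in> S \<inter> (+) b ` L" using assms(3) by blast
  have "subspace (tau S \<inter> L)"
    using subspace_tau[OF assms(1)] p assms(2) by (blast intro: subspace_inter)
  then show ?thesis
    by (simp add: Int_translated_subspace_eq[OF assms(1,2) p] aff_dim_translation_eq aff_dim_subspace)
qed

lemma Psi_iff:
  assumes "\<forall>j\<in>{1..k}. subspace (A j)"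
  shows "S \<in> Psi k A b \<longleftrightarrow>
    S \<in> Graff k \<and> (\<forall>j\<in>{1..k}. S \<inter> s_tr b (A j) \<noteq> {} \<and> j \<le> dim (tau S \<inter> A j))"
proof -
  have "int j \<le> aff_dim (S \<inter> (+) b ` A j) \<longleftrightarrow>
      S \<inter> (+) b ` A j \<noteq> {} \<and> j \<le> dim (tau S \<inter> A j)"
    if "S \<in> Graff k" "j \<in> {1..k}" for j
    using that assms aff_dim_Int_translated_subspace[of S "A j" b]
    by (cases "S \<inter> (+) b ` A j = {}") (auto simp: Graff_def)
  then show ?thesis
    unfolding Psi_def s_tr_eq_translation by auto
qed

lemma Psi_imp_tau_Omega:
  assumes "\<forall>j\<in>{1..k}. subspace (A j)" "S \<in> Psi k A b"
  shows "tau S \<in> Omega k A"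
  using assms tau_in_Gr unfolding Psi_iff[OF assms(1)] Omega_def by auto

lemma s_tr_image_Omega_subset_Psi:
  assumes "\<forall>j\<in>{1..k}. subspace (A j)"
  shows "s_tr b ` Omega k A \<subseteq> Psi k A b"
proof
  fix S assume "S \<in> s_tr b ` Omega k A"
  then have S: "S \<in> Graff k" "b \<in> S" "tau S \<in> Omega k A"
    by (auto simp: s_tr_image_Omega_eq)
  have "b \<in> S \<inter> s_tr b (A j)" if "j \<in> {1..k}" for j
    using S(2) subspace_0 assms that by (force simp: s_tr_eq_translation)
  then show "S \<in> Psi k A b"
    using S unfolding Psi_iff[OF assms] Omega_def by blast
qed

definition translate_toward :: "'a::euclidean_space \<Rightarrow> real \<Rightarrow> 'a set \<Rightarrow> 'a set" where
  "translate_toward b t S = (+) (t *\<^sub>R (b - closest_point S b)) ` S"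

lemma translate_toward_0 [simp]: "translate_toward b 0 S = S"
  by (simp add: translate_toward_def)

lemma translate_toward_fixed: "b \<in> S \<Longrightarrow> translate_toward b t S = S"
  by (simp add: translate_toward_def closest_point_self)

lemma Graff_translate_toward: "S \<in> Graff k \<Longrightarrow> translate_toward b t S \<in> Graff k"
  unfolding translate_toward_def by (rule Graff_translation)

lemma tau_translate_toward: "S \<in> Graff k \<Longrightarrow> tau (translate_toward b t S) = tau S"
  unfolding translate_toward_def Graff_def by (simp add: tau_translation)

lemma mem_translate_toward_1:
  assumes "S \<in> Graff k"
  shows "b \<in> translate_toward b 1 S"
proof -
  have "closest_point S b \<in> S"
    using closest_point_in_set[OF Graff_closed Graff_nonempty, OF assms assms] .
  then show ?thesis
    unfolding translate_toward_def by (force simp: mem_translation_iff)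
qed

lemma translate_toward_Psi:
  assumes sub: "\<forall>j\<in>{1..k}. subspace (A j)" and S: "S \<in> Psi k A b"
  shows "translate_toward b t S \<in> Psi k A b"
proof -
  have G: "S \<in> Graff k" using S unfolding Psi_def by simp
  then have aS: "affine S" unfolding Graff_def by simp
  define q where "q = closest_point S b"
  have qS: "q \<in> S"
    unfolding q_def using closest_point_in_set[OF Graff_closed Graff_nonempty, OF G G] .
  have "translate_toward b t S \<inter> s_tr b (A j) \<noteq> {}" if j: "j \<in> {1..k}" for j
  proof -
    have "S \<inter> (+) b ` A j \<noteq> {}"
      using S j by (simp add: Psi_iff[OF sub] s_tr_eq_translation)
    then obtain p where pS: "p \<in> S" and "p \<in> (+) b ` A j" by blast
    then have pA: "p - b \<in> A j" by (simp only: mem_translation_iff)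
    have "p + t *\<^sub>R (q - p) \<in> S" by (rule mem_affine_3_minus[OF aS pS qS pS])
    then have "p + t *\<^sub>R (b - p) \<in> translate_toward b t S"
      unfolding translate_toward_def q_def[symmetric] mem_translation_iff
      by (simp add: algebra_simps)
    moreover have "p + t *\<^sub>R (b - p) - b = (1 - t) *\<^sub>R (p - b)"
      by (simp add: algebra_simps)
    then have "p + t *\<^sub>R (b - p) \<in> s_tr b (A j)"
      using subspace_scale[OF bspec[OF sub j] pA]
      by (simp add: s_tr_eq_translation mem_translation_iff)
    ultimately show ?thesis by blast
  qed
  then show ?thesis
    using S G unfolding Psi_iff[OF sub] by (simp add: Graff_translate_toward tau_translate_toward)
qed

lemma topspace_Graff_top: "topspace (Graff_top k) = Graff k"
  by (simp add: Graff_top_def topspace_pullback_topology)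

lemma continuous_map_scaleR [continuous_intros]:
  fixes g :: "'x \<Rightarrow> 'b::real_normed_vector"
  shows "continuous_map X euclidean f \<Longrightarrow> continuous_map X euclidean g
    \<Longrightarrow> continuous_map X euclidean (\<lambda>x. f x *\<^sub>R g x)"
  by (simp add: continuous_map_atin tendsto_scaleR)

lemma continuous_map_closest_point_Graff_top:
  "continuous_map (Graff_top k) euclidean (\<lambda>S::'a::euclidean_space set. closest_point S y)"
proof -
  have "continuous_map euclidean euclidean (\<lambda>f::'a \<Rightarrow> 'a. f y)"
    by (metis continuous_map_product_projection euclidean_product_topology UNIV_I)
  from continuous_map_pullback[OF this, of "Graff k" closest_point] show ?thesis
    by (simp add: Graff_top_def o_def)
qed

lemma continuous_map_into_Graff_top:
  assumes "h ` topspace Z \<subseteq> Graff k"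
    and "\<And>y. continuous_map Z euclidean (\<lambda>z. closest_point (h z) y)"
  shows "continuous_map Z (Graff_top k) h"
  unfolding Graff_top_def
proof (rule continuous_map_pullback')
  have "continuous_map Z (product_topology (\<lambda>_. euclidean) UNIV) (closest_point \<circ> h)"
    unfolding continuous_map_componentwise_UNIV using assms(2) by (simp add: o_def)
  then show "continuous_map Z euclidean (closest_point \<circ> h)"
    by (simp add: euclidean_product_topology)
  show "topspace Z \<subseteq> h -` Graff k" using assms(1) by blast
qed

text \<open>Continuity in the set and in the point separately gives joint continuity, because
  each projection is 1-Lipschitz.\<close>

lemma continuous_map_closest_point_param:
  fixes \<sigma> :: "'x \<Rightarrow> 'a::euclidean_space set"
  assumes "\<And>z. z \<in> topspace Z \<Longrightarrow> convex (\<sigma> z) \<and> closed (\<sigma> z) \<and> \<sigma> z \<noteq> {}"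
    and "\<And>y. continuous_map Z euclidean (\<lambda>z. closest_point (\<sigma> z) y)"
    and "continuous_map Z euclidean p"
  shows "continuous_map Z euclidean (\<lambda>z. closest_point (\<sigma> z) (p z))"
  unfolding continuous_map_atin limitin_canonical_iff
proof
  fix z0 assume z0: "z0 \<in> topspace Z"
  have fixed_point: "((\<lambda>z. closest_point (\<sigma> z) (p z0)) \<longlongrightarrow> closest_point (\<sigma> z0) (p z0)) (atin Z z0)"
    using assms(2)[of "p z0"] z0 unfolding continuous_map_atin limitin_canonical_iff by blast
  have "(p \<longlongrightarrow> p z0) (atin Z z0)"
    using assms(3) z0 unfolding continuous_map_atin limitin_canonical_iff by blast
  from tendsto_dist[OF this tendsto_const[of "p z0"]]
  have dist_p: "((\<lambda>z. dist (p z) (p z0)) \<longlongrightarrow> 0) (atin Z z0)"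
    by simp
  have "eventually (\<lambda>z. norm (closest_point (\<sigma> z) (p z) - closest_point (\<sigma> z) (p z0))
      \<le> dist (p z) (p z0)) (atin Z z0)"
    unfolding eventually_atin
  proof (rule disjI2, rule exI[of _ "topspace Z"], intro conjI ballI)
    fix z assume "z \<in> topspace Z - {z0}"
    then have "dist (closest_point (\<sigma> z) (p z)) (closest_point (\<sigma> z) (p z0)) \<le> dist (p z) (p z0)"
      using assms(1) closest_point_lipschitz by blast
    then show "norm (closest_point (\<sigma> z) (p z) - closest_point (\<sigma> z) (p z0)) \<le> dist (p z) (p z0)"
      by (simp add: dist_norm)
  qed (use z0 in auto)
  from tendsto_add[OF Lim_null_comparison[OF this dist_p] fixed_point]
  show "((\<lambda>z. closest_point (\<sigma> z) (p z)) \<longlongrightarrow> closest_point (\<sigma> z0) (p z0)) (atin Z z0)"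
    by simp
qed

lemma continuous_map_translate_toward:
  fixes b :: "'a::euclidean_space"
  shows "continuous_map (prod_topology euclideanreal (Graff_top k)) (Graff_top k)
     (\<lambda>(t, S). translate_toward b t S)"
proof (rule continuous_map_into_Graff_top)
  let ?Z = "prod_topology euclideanreal (Graff_top k :: 'a set topology)"
  have top: "topspace ?Z = UNIV \<times> Graff k"
    by (simp add: topspace_Graff_top)
  show "(\<lambda>(t, S). translate_toward b t S) ` topspace ?Z \<subseteq> Graff k"
    unfolding top by (auto intro: Graff_translate_toward)
  have cp: "continuous_map ?Z euclidean (\<lambda>z. closest_point (snd z) y)" for y
    using continuous_map_compose[OF continuous_map_snd continuous_map_closest_point_Graff_top]
    by (simp add: o_def)
  let ?v = "\<lambda>z. fst z *\<^sub>R (b - closest_point (snd z) b)"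
  have v: "continuous_map ?Z euclidean ?v"
    by (rule continuous_map_scaleR[OF continuous_map_fst continuous_map_diff[OF _ cp]]) simp
  have "continuous_map ?Z euclidean (\<lambda>z. closest_point (snd z) (y - ?v z))" for y
    by (rule continuous_map_closest_point_param[OF _ cp continuous_map_diff[OF _ v]])
      (auto simp: topspace_Graff_top Graff_closed Graff_convex Graff_nonempty)
  then have moved: "continuous_map ?Z euclidean (\<lambda>z. ?v z + closest_point (snd z) (y - ?v z))"
    for y by (rule continuous_map_add[OF v])
  show "continuous_map ?Z euclidean (\<lambda>z. closest_point ((\<lambda>(t, S). translate_toward b t S) z) y)"
    for y
    by (rule continuous_map_eq[OF moved])
      (auto simp: topspace_Graff_top translate_toward_def closest_point_translation
        Graff_closed Graff_convex Graff_nonempty)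
qed

lemma strong_deformation_retract_imp_homotopy_equivalent_space:
  assumes "strong_deformation_retract_of_space S X"
  shows "X homotopy_equivalent_space subtopology X S"
proof -
  obtain r where hom: "homotopic_with (\<lambda>h. \<forall>x\<in>S. h x = x) X X id r"
    and r_into: "r ` topspace X \<subseteq> S"
    using assms unfolding strong_deformation_retract_of_space_def by blast
  have r_fix: "\<forall>x\<in>S. r x = x" using homotopic_with_imp_property[OF hom] by blast
  have r_cont: "continuous_map X X r" using homotopic_with_imp_continuous_maps[OF hom] by blast
  have "retraction_maps X (subtopology X S) r id"
    unfolding retraction_maps_def
  proof (intro conjI ballI)
    show "continuous_map X (subtopology X S) r"
      using r_cont r_into by (simp add: continuous_map_in_subtopology image_subset_iff_funcset)
    show "continuous_map (subtopology X S) X id"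
      by (rule continuous_map_from_subtopology[OF continuous_map_id])
    show "r (id x) = x" if "x \<in> topspace (subtopology X S)" for x
      using that r_fix by simp
  qed
  moreover have "homotopic_with (\<lambda>h. True) X X r id"
    by (rule homotopic_with_symD[OF homotopic_with_mono[OF hom]]) simp
  ultimately show ?thesis
    using deformation_retract_imp_homotopy_equivalent_space by blast
qed

lemma strong_deformation_retract_translate_toward:
  fixes T :: "'a::euclidean_space set set"
  assumes "T \<subseteq> Graff k" and "\<And>S t. S \<in> T \<Longrightarrow> translate_toward b t S \<in> T"
  shows "strong_deformation_retract_of_space {S \<in> T. b \<in> S} (subtopology (Graff_top k) T)"
proof -
  let ?X = "subtopology (Graff_top k) T"
  have top: "topspace ?X = T" using assms(1) by (auto simp: topspace_Graff_top)
  have "continuous_map (prod_topology (top_of_set {0..1}) ?X) (Graff_top k)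
      (\<lambda>(t, S). translate_toward b t S)"
    using continuous_map_from_subtopology[OF continuous_map_translate_toward, where S = "{0..1} \<times> T"]
    by (simp add: subtopology_Times)
  then have "continuous_map (prod_topology (top_of_set {0..1}) ?X) ?X
      (\<lambda>(t, S). translate_toward b t S)"
    using assms(2) by (auto simp: continuous_map_in_subtopology top)
  then have "homotopic_with (\<lambda>h. \<forall>S\<in>{S \<in> T. b \<in> S}. h S = S) ?X ?X id (translate_toward b 1)"
    unfolding homotopic_with_def
    by (intro exI[of _ "\<lambda>(t, S). translate_toward b t S"]) (auto simp: translate_toward_fixed)
  moreover have "translate_toward b 1 ` topspace ?X \<subseteq> {S \<in> T. b \<in> S}"
    unfolding top using assms mem_translate_toward_1 by blast
  ultimately show ?thesis
    unfolding strong_deformation_retract_of_space_def top by auto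
qed

theorem theorem7p6:
  fixes k :: nat and A :: "nat \<Rightarrow> (real ^ 'n) set" and b :: "real ^ 'n"
  assumes "\<forall>j\<in>{1..k}. subspace (A j)"
    and "\<forall>j. 1 \<le> j \<and> j < k \<longrightarrow> A j \<subseteq> A (Suc j)"
  shows "strong_deformation_retract_of_space (s_tr b ` Omega k A)
           (subtopology (Graff_top k) (Psi k A b))
       \<and> (subtopology (Graff_top k) (Psi k A b)) homotopy_equivalent_space
           (subtopology (Graff_top k) {S \<in> Graff k. tau S \<in> Omega k A})"
proof -
  let ?R = "s_tr b ` Omega k A" and ?T = "{S \<in> Graff k. tau S \<in> Omega k A}"
  have Psi_sub: "Psi k A b \<subseteq> ?T"
    using Psi_imp_tau_Omega[OF assms(1)] by (auto simp: Psi_def)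
  have R_T: "?R = {S \<in> ?T. b \<in> S}"
    by (auto simp: s_tr_image_Omega_eq)
  have R_Psi: "?R = {S \<in> Psi k A b. b \<in> S}"
    using R_T Psi_sub s_tr_image_Omega_subset_Psi[OF assms(1)] by blast
  have Psi_retract: "strong_deformation_retract_of_space ?R (subtopology (Graff_top k) (Psi k A b))"
    unfolding R_Psi
    by (rule strong_deformation_retract_translate_toward[OF _ translate_toward_Psi[OF assms(1)]])
      (auto simp: Psi_def)
  have T_retract: "strong_deformation_retract_of_space ?R (subtopology (Graff_top k) ?T)"
    unfolding R_T
    by (rule strong_deformation_retract_translate_toward)
      (auto simp: Graff_translate_toward tau_translate_toward)
  have "Psi k A b \<inter> ?R = ?R" "?T \<inter> ?R = ?R"
    using R_Psi R_T by blast+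
  then have "subtopology (Graff_top k) (Psi k A b) homotopy_equivalent_space subtopology (Graff_top k) ?R"
    and "subtopology (Graff_top k) ?T homotopy_equivalent_space subtopology (Graff_top k) ?R"
    using strong_deformation_retract_imp_homotopy_equivalent_space[OF Psi_retract]
      strong_deformation_retract_imp_homotopy_equivalent_space[OF T_retract]
    by (simp_all only: subtopology_subtopology)
  then have "subtopology (Graff_top k) (Psi k A b) homotopy_equivalent_space subtopology (Graff_top k) ?T"
    using homotopy_eqv_trans homotopy_equivalent_space_sym by blast
  then show ?thesis
    using Psi_retract by blast
qed

end
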